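(* Let $J\subseteq\mathbb{R}$ be an interval, $f:J\to\mathbb{R}$ convex, $a,b\in J$, $\nu\in[0,1]$, $r=\min\{\nu,1-\nu\}$, $R=\max\{\nu,1-\nu\}$, and $$\Phi_f(\nu):=\int_0^1\left(\frac{f\big(a\nabla_{\nu\lambda}b\big)+f\big(b\nabla_{(1-\nu)\lambda}a\big)}{2}-f\Big(a\nabla_{\frac{1+\lambda(2\nu-1)}{2}}b\Big)\right)d\lambda,\qquad \Delta_f:=\frac{f(a)+f(b)}{2}-f\Big(\frac{a+b}{2}\Big).$$ Then $$2\big(r\,\Phi_f(\nu)+\widetilde r(\nu)\,\Delta_f\big)\le f(a)\nabla_\nu f(b)-f\big(a\nabla_\nu b\big)\le 2\big(R\,\Phi_f(\nu)+\widetilde R(\nu)\,\Delta_f\big).$$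
   Context: For real $x,y$ and $\mu\in[0,1]$, $x\nabla_\mu y:=(1-\mu)x+\mu y$. For $\lambda\in[0,1]$ let $r_1(\lambda)=\min\{\nu\lambda,1-\nu\lambda\}$, $r_2(\lambda)=\min\{(1-\nu)\lambda,1-(1-\nu)\lambda\}$, $R_1(\lambda)=\max\{\nu\lambda,1-\nu\lambda\}$, $R_2(\lambda)=\max\{(1-\nu)\lambda,1-(1-\nu)\lambda\}$, and $\widetilde r(\nu):=\int_0^1((1-\nu)r_1(\lambda)+\nu r_2(\lambda))d\lambda$, $\widetilde R(\nu):=\int_0^1((1-\nu)R_1(\lambda)+\nu R_2(\lambda))d\lambda$. *)

theory Defs
  imports "HOL-Analysis.Analysis"
begin

definition nabla :: "real \<Rightarrow> real \<Rightarrow> real \<Rightarrow> real" where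
  "nabla x \<mu> y = (1 - \<mu>) * x + \<mu> * y"

definition r1 :: "real \<Rightarrow> real \<Rightarrow> real" where
  "r1 \<nu> t = min (\<nu> * t) (1 - \<nu> * t)"
definition r2 :: "real \<Rightarrow> real \<Rightarrow> real" where
  "r2 \<nu> t = min ((1 - \<nu>) * t) (1 - (1 - \<nu>) * t)"
definition R1 :: "real \<Rightarrow> real \<Rightarrow> real" where
  "R1 \<nu> t = max (\<nu> * t) (1 - \<nu> * t)"
definition R2 :: "real \<Rightarrow> real \<Rightarrow> real" where
  "R2 \<nu> t = max ((1 - \<nu>) * t) (1 - (1 - \<nu>) * t)"

definition r_tilde :: "real \<Rightarrow> real" where
  "r_tilde \<nu> = integral {0..1} (\<lambda>t. (1 - \<nu>) * r1 \<nu> t + \<nu> * r2 \<nu> t)"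
definition R_tilde :: "real \<Rightarrow> real" where
  "R_tilde \<nu> = integral {0..1} (\<lambda>t. (1 - \<nu>) * R1 \<nu> t + \<nu> * R2 \<nu> t)"

definition Phi :: "(real \<Rightarrow> real) \<Rightarrow> real \<Rightarrow> real \<Rightarrow> real \<Rightarrow> real" where
  "Phi f a b \<nu> = integral {0..1} (\<lambda>t.
      (f (nabla a (\<nu> * t) b) + f (nabla b ((1 - \<nu>) * t) a)) / 2
      - f (nabla a ((1 + t * (2 * \<nu> - 1)) / 2) b))"

definition Delta :: "(real \<Rightarrow> real) \<Rightarrow> real \<Rightarrow> real \<Rightarrow> real" where
  "Delta f a b = (f a + f b) / 2 - f ((a + b) / 2)"

end

theory Submission
  imports Defs
begin

text \<open>
  For \<open>\<lambda> \<in> [0,1]\<close> put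
  \<open>X = a \<nabla>\<^bsub>\<nu>\<lambda>\<^esub> b\<close> and \<open>Y = b \<nabla>\<^bsub>(1-\<nu>)\<lambda>\<^esub> a\<close>. Then \<open>X \<nabla>\<^sub>\<nu> Y = a \<nabla>\<^sub>\<nu> b\<close>, and the Jensen gap of
  \<open>f\<close> at \<open>(a, \<nu>, b)\<close> splits exactly into the gap at \<open>(X, \<nu>, Y)\<close> plus \<open>1 - \<nu>\<close> times the gap at
  \<open>(a, \<nu>\<lambda>, b)\<close> plus \<open>\<nu>\<close> times the gap at \<open>(b, (1-\<nu>)\<lambda>, a)\<close>. Each of the three gaps lies between
  \<open>2 min(t, 1-t)\<close> and \<open>2 max(t, 1-t)\<close> times the midpoint gap \<open>Delta\<close> of its endpoints (the classical
  refinement of Jensen's inequality, obtained from convexity along \<open>x, x \<nabla>\<^sub>t y, (x+y)/2, y\<close>), and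
  the midpoint gap of \<open>X, Y\<close> is the integrand of \<open>\<Phi>\<^sub>f\<close>. Integrating the resulting pointwise bounds
  over \<open>\<lambda> \<in> [0,1]\<close> gives the theorem; integrability holds because a convex function on a
  compact interval is bounded and continuous in the interior.
\<close>

definition jensen_gap :: "(real \<Rightarrow> real) \<Rightarrow> real \<Rightarrow> real \<Rightarrow> real \<Rightarrow> real" where
  "jensen_gap f x t y = nabla (f x) t (f y) - f (nabla x t y)"

lemma nabla_swap: "nabla y (1 - t) x = nabla x t y"
  by (simp add: nabla_def algebra_simps)

lemma nabla_mult: "nabla x (s * t) y = nabla x t (nabla x s y)"
  by (simp add: nabla_def algebra_simps)

lemma jensen_gap_swap: "jensen_gap f y (1 - t) x = jensen_gap f x t y"
  by (simp add: jensen_gap_def nabla_swap)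

lemma Delta_commute: "Delta f y x = Delta f x y"
  by (simp add: Delta_def add.commute)

lemma nabla_mem:
  assumes "convex S" "x \<in> S" "y \<in> S" "0 \<le> t" "t \<le> 1"
  shows "nabla x t y \<in> S"
  using convexD[OF assms(1-3), of "1 - t" t] assms(4,5) by (simp add: nabla_def)

lemma convex_on_nabla:
  assumes "convex_on S f" "x \<in> S" "y \<in> S" "0 \<le> t" "t \<le> 1"
  shows "f (nabla x t y) \<le> nabla (f x) t (f y)"
  using convex_onD[OF assms(1,4,5,2,3)] by (simp add: nabla_def)

lemma jensen_gap_bounds_half:
  assumes f: "convex_on S f" and xy: "x \<in> S" "y \<in> S" and t: "0 \<le> t" "t \<le> 1/2"
  shows "2 * t * Delta f x y \<le> jensen_gap f x t y"
    and "jensen_gap f x t y \<le> 2 * (1 - t) * Delta f x y"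
proof -
  have S: "convex S" using f by (rule convex_on_imp_convex)
  define m where "m = nabla x (1/2) y"
  define p where "p = nabla x t y"
  have mS: "m \<in> S" unfolding m_def using nabla_mem[OF S xy] by simp
  have pS: "p \<in> S" unfolding p_def using nabla_mem[OF S xy t(1)] t by simp
  have Delta_m: "Delta f x y = (f x + f y) / 2 - f m"
    by (simp add: Delta_def m_def nabla_def field_simps)
  txt \<open>\<open>p\<close> lies between \<open>x\<close> and \<open>m\<close>, and \<open>m\<close> lies between \<open>p\<close> and \<open>y\<close>.\<close>
  have "p = nabla x (2 * t) m"
    by (simp add: p_def m_def nabla_def algebra_simps)
  then have "f p \<le> nabla (f x) (2 * t) (f m)"
    using convex_on_nabla[OF f xy(1) mS] t by simp
  then show "2 * t * Delta f x y \<le> jensen_gap f x t y"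
    unfolding jensen_gap_def Delta_m p_def[symmetric] by (simp add: nabla_def field_simps)
  define s where "s = 1 / (2 * (1 - t))"
  have s: "s * (1 - t) = 1/2" "0 \<le> s" "s \<le> 1" using t by (auto simp: s_def field_simps)
  have "nabla y s p = (s * (1 - t)) * x + (1 - s * (1 - t)) * y"
    by (simp add: nabla_def p_def algebra_simps)
  then have "m = nabla y s p"
    by (simp add: s(1) m_def nabla_def)
  then have "f m \<le> nabla (f y) s (f p)"
    using convex_on_nabla[OF f xy(2) pS s(2,3)] by simp
  then have "2 * (1 - t) * f m \<le> 2 * (1 - t) * nabla (f y) s (f p)"
    using t by (simp add: mult_left_mono)
  also have "\<dots> = 2 * (1 - t) * f y + 2 * (s * (1 - t)) * (f p - f y)"
    by (simp add: nabla_def algebra_simps)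
  also have "\<dots> = f p + (1 - 2 * t) * f y"
    unfolding s(1) by (simp add: algebra_simps)
  finally have "2 * (1 - t) * f m \<le> f p + (1 - 2 * t) * f y" .
  then show "jensen_gap f x t y \<le> 2 * (1 - t) * Delta f x y"
    unfolding jensen_gap_def Delta_m p_def[symmetric] by (simp add: nabla_def field_simps)
qed

lemma jensen_gap_bounds:
  assumes f: "convex_on S f" and xy: "x \<in> S" "y \<in> S" and t: "0 \<le> t" "t \<le> 1"
  shows "2 * min t (1 - t) * Delta f x y \<le> jensen_gap f x t y
       \<and> jensen_gap f x t y \<le> 2 * max t (1 - t) * Delta f x y"
proof (cases "t \<le> 1/2")
  case True
  then show ?thesis using jensen_gap_bounds_half[OF f xy t(1)] by (simp add: min_def max_def)
next
  case False
  then have "0 \<le> 1 - t" "1 - t \<le> 1/2" using t by auto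
  from jensen_gap_bounds_half[OF f xy(2,1) this] False show ?thesis
    by (simp add: jensen_gap_swap Delta_commute min_def max_def)
qed

lemma jensen_gap_split:
  fixes f :: "real \<Rightarrow> real" and a b \<nu> t :: real
  defines "X \<equiv> nabla a (\<nu> * t) b" and "Y \<equiv> nabla b ((1 - \<nu>) * t) a"
  shows "jensen_gap f a \<nu> b
       = jensen_gap f X \<nu> Y + (1 - \<nu>) * jensen_gap f a (\<nu> * t) b
         + \<nu> * jensen_gap f b ((1 - \<nu>) * t) a"
proof -
  have "nabla X \<nu> Y = nabla a \<nu> b"
    by (simp add: X_def Y_def nabla_def algebra_simps)
  then show ?thesis
    by (simp add: jensen_gap_def X_def Y_def nabla_def algebra_simps)
qed

lemma convex_on_Icc_integrable:
  fixes G :: "real \<Rightarrow> real"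
  assumes G: "convex_on {p..q} G"
  shows "G integrable_on {p..q}"
proof -
  define M where "M = max (G p) (G q)"
  define C where "C = \<bar>M\<bar> + 2 * \<bar>G ((p + q) / 2)\<bar>"
  have upper: "G t \<le> M" if "t \<in> {p..q}" for t
    using convex_on_le_max[OF G that] by (simp add: M_def)
  have bounded: "\<bar>G t\<bar> \<le> C" if t: "t \<in> {p..q}" for t
  proof -
    txt \<open>The midpoint of \<open>t\<close> and its reflection \<open>p + q - t\<close> bounds \<open>G t\<close> from below.\<close>
    have t': "p + q - t \<in> {p..q}" using t by auto
    have "G (t / 2 + (p + q - t) / 2) \<le> G t / 2 + G (p + q - t) / 2"
      using convex_onD[OF G, of "1/2" t "p + q - t"] t t' by simp
    moreover have "t / 2 + (p + q - t) / 2 = (p + q) / 2"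
      by (simp add: field_simps)
    ultimately have "2 * G ((p + q) / 2) \<le> G t + G (p + q - t)"
      by simp
    then show ?thesis
      using upper[OF t] upper[OF t'] unfolding C_def by linarith
  qed
  have "continuous_on {p<..<q} G"
    by (rule convex_on_continuous) (auto intro: convex_on_subset[OF G])
  then have "G \<in> borel_measurable (lebesgue_on {p<..<q})"
    by (auto intro: continuous_imp_measurable_on_sets_lebesgue)
  then have "G integrable_on {p<..<q}"
    by (rule measurable_bounded_by_integrable_imp_integrable_real[where g = "\<lambda>_. C"])
      (use bounded in \<open>auto simp: integrable_on_open_interval_real\<close>)
  then show ?thesis by (simp add: integrable_on_open_interval_real)
qed

lemma convex_on_nabla_integrable:
  assumes f: "convex_on S f" and xy: "x \<in> S" "y \<in> S"
  shows "(\<lambda>t. f (nabla x t y)) integrable_on {0..1}"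
proof (rule convex_on_Icc_integrable, rule convex_onI)
  fix s u v :: real
  assume s: "0 < s" "s < 1" and uv: "u \<in> {0..1}" "v \<in> {0..1}"
  have "nabla x ((1 - s) *\<^sub>R u + s *\<^sub>R v) y = nabla (nabla x u y) s (nabla x v y)"
    by (simp add: nabla_def algebra_simps)
  moreover have "nabla x u y \<in> S" "nabla x v y \<in> S"
    using uv nabla_mem[OF convex_on_imp_convex[OF f] xy] by auto
  ultimately show "f (nabla x ((1 - s) *\<^sub>R u + s *\<^sub>R v) y)
      \<le> (1 - s) * f (nabla x u y) + s * f (nabla x v y)"
    using convex_on_nabla[OF f, of _ _ s] s by (simp add: nabla_def)
qed simp

definition Phi_integrand :: "(real \<Rightarrow> real) \<Rightarrow> real \<Rightarrow> real \<Rightarrow> real \<Rightarrow> real \<Rightarrow> real" where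
  "Phi_integrand f a b \<nu> t =
     (f (nabla a (\<nu> * t) b) + f (nabla b ((1 - \<nu>) * t) a)) / 2
     - f (nabla a ((1 + t * (2 * \<nu> - 1)) / 2) b)"

lemma Phi_eq_integral: "Phi f a b \<nu> = integral {0..1} (Phi_integrand f a b \<nu>)"
  unfolding Phi_def Phi_integrand_def ..

lemma Phi_integrand_eq_Delta:
  "Phi_integrand f a b \<nu> t = Delta f (nabla a (\<nu> * t) b) (nabla b ((1 - \<nu>) * t) a)"
proof -
  have "(nabla a (\<nu> * t) b + nabla b ((1 - \<nu>) * t) a) / 2 = nabla a ((1 + t * (2 * \<nu> - 1)) / 2) b"
    by (simp add: nabla_def field_simps)
  then show ?thesis by (simp add: Phi_integrand_def Delta_def)
qed

lemma Phi_integrand_integrable: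
  assumes f: "convex_on J f" and ab: "a \<in> J" "b \<in> J" and \<nu>: "0 \<le> \<nu>" "\<nu> \<le> 1"
  shows "Phi_integrand f a b \<nu> integrable_on {0..1}"
proof -
  have J: "convex J" using f by (rule convex_on_imp_convex)
  have "nabla a (1/2) b \<in> J" "nabla a \<nu> b \<in> J" "nabla b (1 - \<nu>) a \<in> J"
    using nabla_mem[OF J] ab \<nu> by auto
  txt \<open>Each of the three terms is \<open>f\<close> along a segment in \<open>J\<close>, parametrised by \<open>t \<in> [0,1]\<close>.\<close>
  then have "(\<lambda>t. (f (nabla a t (nabla a \<nu> b)) + f (nabla b t (nabla b (1 - \<nu>) a))) / 2
               - f (nabla (nabla a (1/2) b) t (nabla a \<nu> b))) integrable_on {0..1}"
    using ab by (intro integrable_diff integrable_on_divide integrable_add convex_on_nabla_integrable[OF f])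
  moreover have "nabla (nabla a (1/2) b) t (nabla a \<nu> b) = nabla a ((1 + t * (2 * \<nu> - 1)) / 2) b" for t
    by (simp add: nabla_def field_simps)
  ultimately show ?thesis
    unfolding Phi_integrand_def[abs_def] by (simp add: nabla_mult[symmetric])
qed

lemma jensen_gap_pointwise_bounds:
  assumes f: "convex_on J f" and ab: "a \<in> J" "b \<in> J"
    and \<nu>: "0 \<le> \<nu>" "\<nu> \<le> 1" and t: "0 \<le> t" "t \<le> 1"
  shows "2 * (min \<nu> (1 - \<nu>) * Phi_integrand f a b \<nu> t
              + ((1 - \<nu>) * r1 \<nu> t + \<nu> * r2 \<nu> t) * Delta f a b)
           \<le> jensen_gap f a \<nu> b
       \<and> jensen_gap f a \<nu> b
           \<le> 2 * (max \<nu> (1 - \<nu>) * Phi_integrand f a b \<nu> t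
              + ((1 - \<nu>) * R1 \<nu> t + \<nu> * R2 \<nu> t) * Delta f a b)"
proof -
  define X where "X = nabla a (\<nu> * t) b"
  define Y where "Y = nabla b ((1 - \<nu>) * t) a"
  have s1: "0 \<le> \<nu> * t" "\<nu> * t \<le> 1" and s2: "0 \<le> (1 - \<nu>) * t" "(1 - \<nu>) * t \<le> 1"
    using \<nu> t by (auto intro: mult_le_one)
  have XY: "X \<in> J" "Y \<in> J"
    using nabla_mem[OF convex_on_imp_convex[OF f]] ab s1 s2 by (auto simp: X_def Y_def)
  have inner: "2 * min \<nu> (1 - \<nu>) * Phi_integrand f a b \<nu> t \<le> jensen_gap f X \<nu> Y
             \<and> jensen_gap f X \<nu> Y \<le> 2 * max \<nu> (1 - \<nu>) * Phi_integrand f a b \<nu> t"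
    using jensen_gap_bounds[OF f XY \<nu>] by (simp add: Phi_integrand_eq_Delta X_def Y_def)
  have outer_a: "2 * r1 \<nu> t * Delta f a b \<le> jensen_gap f a (\<nu> * t) b
             \<and> jensen_gap f a (\<nu> * t) b \<le> 2 * R1 \<nu> t * Delta f a b"
    using jensen_gap_bounds[OF f ab s1] by (simp add: r1_def R1_def)
  have outer_b: "2 * r2 \<nu> t * Delta f a b \<le> jensen_gap f b ((1 - \<nu>) * t) a
             \<and> jensen_gap f b ((1 - \<nu>) * t) a \<le> 2 * R2 \<nu> t * Delta f a b"
    using jensen_gap_bounds[OF f ab(2,1) s2] by (simp add: r2_def R2_def Delta_commute)
  have "(1 - \<nu>) * (2 * r1 \<nu> t * Delta f a b) \<le> (1 - \<nu>) * jensen_gap f a (\<nu> * t) b"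
       "(1 - \<nu>) * jensen_gap f a (\<nu> * t) b \<le> (1 - \<nu>) * (2 * R1 \<nu> t * Delta f a b)"
       "\<nu> * (2 * r2 \<nu> t * Delta f a b) \<le> \<nu> * jensen_gap f b ((1 - \<nu>) * t) a"
       "\<nu> * jensen_gap f b ((1 - \<nu>) * t) a \<le> \<nu> * (2 * R2 \<nu> t * Delta f a b)"
    using outer_a outer_b \<nu> by (simp_all add: mult_left_mono)
  then show ?thesis
    using inner jensen_gap_split[of f a \<nu> b t] unfolding X_def Y_def
    by (simp add: algebra_simps)
qed

theorem corollary2p21:
  fixes J :: "real set" and f :: "real \<Rightarrow> real" and a b \<nu> :: real
  assumes "is_interval J"
    and "convex_on J f"
    and "a \<in> J" and "b \<in> J"
    and "0 \<le> \<nu>" and "\<nu> \<le> 1"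
  defines "r \<equiv> min \<nu> (1 - \<nu>)" and "R \<equiv> max \<nu> (1 - \<nu>)"
  shows "2 * (r * Phi f a b \<nu> + r_tilde \<nu> * Delta f a b)
           \<le> nabla (f a) \<nu> (f b) - f (nabla a \<nu> b)
         \<and> nabla (f a) \<nu> (f b) - f (nabla a \<nu> b)
           \<le> 2 * (R * Phi f a b \<nu> + R_tilde \<nu> * Delta f a b)"
proof -
  define h where "h = Phi_integrand f a b \<nu>"
  define k where "k = (\<lambda>t. (1 - \<nu>) * r1 \<nu> t + \<nu> * r2 \<nu> t)"
  define K where "K = (\<lambda>t. (1 - \<nu>) * R1 \<nu> t + \<nu> * R2 \<nu> t)"
  have integrable: "h integrable_on {0..1}" "k integrable_on {0..1}" "K integrable_on {0..1}"
    using Phi_integrand_integrable[OF assms(2-6)] unfolding h_def k_def K_def r1_def r2_def R1_def R2_def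
    by (auto intro!: integrable_continuous_real continuous_intros)
  have combination: "((\<lambda>t. 2 * (c * h t + w t * Delta f a b))
      has_integral 2 * (c * integral {0..1} h + integral {0..1} w * Delta f a b)) {0..1}"
    if "w integrable_on {0..1}" for c w
    using integrable(1) that
    by (intro has_integral_mult_right has_integral_add has_integral_mult_left integrable_integral)
  have constant_integral: "((\<lambda>_. jensen_gap f a \<nu> b) has_integral jensen_gap f a \<nu> b) {0..1::real}"
    using has_integral_const_real[of "jensen_gap f a \<nu> b" 0 1] by simp
  have pointwise: "2 * (r * h t + k t * Delta f a b) \<le> jensen_gap f a \<nu> b
                 \<and> jensen_gap f a \<nu> b \<le> 2 * (R * h t + K t * Delta f a b)" if "t \<in> {0..1}" for t
    using jensen_gap_pointwise_bounds[OF assms(2-6)] that by (simp add: h_def k_def K_def r_def R_def)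
  have "2 * (r * integral {0..1} h + integral {0..1} k * Delta f a b) \<le> jensen_gap f a \<nu> b"
    using pointwise by (intro has_integral_le[OF combination[OF integrable(2)] constant_integral]) auto
  moreover have "jensen_gap f a \<nu> b \<le> 2 * (R * integral {0..1} h + integral {0..1} K * Delta f a b)"
    using pointwise by (intro has_integral_le[OF constant_integral combination[OF integrable(3)]]) auto
  ultimately show ?thesis
    by (simp add: Phi_eq_integral r_tilde_def R_tilde_def h_def k_def K_def jensen_gap_def)
qed

end
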